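(* Fix $(\sigma,i)$ with $1\le\sigma\le l$ and $1\le i\le d_\sigma$, and let $b_i^{(\sigma)}\colon C_i^{(\sigma)}\to\mathbb{A}^d$ be the chart described below. Then there exists a $k$-derivation $\psi$ of $\Gamma(C_i^{(\sigma)},\mathcal{O})=k[u_j^{(\pi)}]$ such that $b_i^{(\sigma),*}\partial_\mathbf{d}=u_i^{(\sigma)}\cdot\psi$ (as rational vector fields) and the coefficients of $\psi$ in the basis $\{\partial/\partial u_j^{(\pi)}\}$ generate the unit ideal. In particular the pullback $1$-foliation $b_i^{(\sigma),*}\mathscr{F}$, which is generated by $\psi$, is regular.
   Context: $k$ algebraically closed of characteristic $p>0$; $\mathbf{d}=(d_1,\dots,d_l)$ with $0\le d_\lambda\le p-1$; $\mathbb{A}^d$ has coordinates $x_j^{(\pi)}$ ($1\le\pi\le l$, $0\le j\le d_\pi$); $\partial_\mathbf{d}=\sum_\pi\sum_{j=1}^{d_\pi}x_j^{(\pi)}\partial/\partial x_{j-1}^{(\pi)}$ and $\mathscr{F}=\mathcal{O}_{\mathbb{A}^d}\cdot\partial_\mathbf{d}$. The chart $C_i^{(\sigma)}=\operatorname{Spec}k[u_j^{(\pi)}\mid 1\le\pi\le l,\ 0\le j\le d_\pi]$ (an affine chart of the weighted blow-up of $\mathbb{A}^d$ giving $x_j^{(\pi)}$ weight $j$) maps to $\mathbb{A}^d$ via: $x_0^{(\pi)}=u_0^{(\pi)}$ for all $\pi$; $x_i^{(\sigma)}=(u_i^{(\sigma)})^i$; $x_j^{(\pi)}=(u_i^{(\sigma)})^j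 u_j^{(\pi)}$ for all $(\pi,j)$ with $j\ge1$ and $(\pi,j)\ne(\sigma,i)$. The pullback $1$-foliation on $C_i^{(\sigma)}$ is the saturation of the subsheaf of the tangent sheaf generated by $b_i^{(\sigma),*}\partial_\mathbf{d}$ (which is birational). *)

theory Defs
  imports "HOL-Computational_Algebra.Polynomial" "HOL-Library.Poly_Mapping"
begin

text \<open>Polynomials over 'k in variables indexed by pairs (pp, j), encoded as
  finitely supported maps from monomials (exponent vectors) to coefficients.\<close>

type_synonym 'k mpoly = "((nat \<times> nat) \<Rightarrow>\<^sub>0 nat) \<Rightarrow>\<^sub>0 'k"

definition var :: "nat \<Rightarrow> nat \<Rightarrow> 'k::comm_ring_1 mpoly" where
  "var pp j = Poly_Mapping.single (Poly_Mapping.single (pp, j) 1) 1"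

definition const :: "'k::comm_ring_1 \<Rightarrow> 'k mpoly" where
  "const c = Poly_Mapping.single 0 c"

definition idx :: "nat \<Rightarrow> (nat \<Rightarrow> nat) \<Rightarrow> (nat \<times> nat) set" where
  "idx l d = {(pp, j). 1 \<le> pp \<and> pp \<le> l \<and> j \<le> d pp}"

definition polyring :: "nat \<Rightarrow> (nat \<Rightarrow> nat) \<Rightarrow> 'k::comm_ring_1 mpoly set" where
  "polyring l d = {f. \<forall>m \<in> Poly_Mapping.keys f. Poly_Mapping.keys m \<subseteq> idx l d}"

definition is_k_derivation :: "nat \<Rightarrow> (nat \<Rightarrow> nat) \<Rightarrow> ('k::comm_ring_1 mpoly \<Rightarrow> 'k mpoly) \<Rightarrow> bool" where
  "is_k_derivation l d D \<longleftrightarrow>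
     (\<forall>f \<in> polyring l d. D f \<in> polyring l d) \<and>
     (\<forall>f \<in> polyring l d. \<forall>g \<in> polyring l d. D (f + g) = D f + D g) \<and>
     (\<forall>f \<in> polyring l d. \<forall>g \<in> polyring l d. D (f * g) = f * D g + g * D f) \<and>
     (\<forall>c. D (const c) = 0)"

text \<open>The pullback under the chart b_i^(sigma) of the coordinate x_j^(pp).\<close>
definition chart_pullback :: "nat \<Rightarrow> nat \<Rightarrow> nat \<Rightarrow> nat \<Rightarrow> 'k::comm_ring_1 mpoly" where
  "chart_pullback sigma i pp j =
     (if j = 0 then var pp 0
      else if (pp, j) = (sigma, i) then (var sigma i) ^ i
      else (var sigma i) ^ j * var pp j)"

text \<open>The vector field partial_d applied to x_j^(pp): x_{j+1}^(pp) if j < d pp, else 0;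
  expressed through its pullback.\<close>
definition pullback_of_partial :: "(nat \<Rightarrow> nat) \<Rightarrow> nat \<Rightarrow> nat \<Rightarrow> nat \<Rightarrow> nat \<Rightarrow> 'k::comm_ring_1 mpoly" where
  "pullback_of_partial d sigma i pp j =
     (if j < d pp then chart_pullback sigma i pp (Suc j) else 0)"

end

theory Submission
  imports Defs
begin

text \<open>Write t = u_i^(sigma), w = u_(i+1)^(sigma) (or 0 if i = d_sigma), and let e_j be the
  variable u_j^(pi), except that e_i^(sigma) = 1. On the chart x_j = t^j e_j, and the field
  sends x_j to x_(j+1), so its pullback sends t^j e_j to t^(j+1) e_(j+1): it is divisible by t.
  Solving the Leibniz rule for the quotient psi on the variables gives psi(t) = t w / i and
  psi(u_j) = e_(j+1) - (j / i) u_j w otherwise; this requires i to be a unit of k, which it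
  is since i <= d_sigma < p. Along the sigma-block the coefficients form the chain
  psi(u_j) = e_(j+1) - r_j e_j (j < i) with r_0 = 0 and e_i = 1, which telescopes to 1.\<close>

lemma sum_prod_telescope:
  fixes e r g :: "nat \<Rightarrow> 'a::comm_ring_1"
  assumes "\<And>j. j < n \<Longrightarrow> g j = e (Suc j) - r j * e j"
  shows "(\<Sum>j<n. (\<Prod>m = Suc j..<n. r m) * g j) = e n - (\<Prod>j<n. r j) * e 0"
  using assms
proof (induction n)
  case 0
  then show ?case by simp
next
  case (Suc n)
  have IH: "(\<Sum>j<n. (\<Prod>m = Suc j..<n. r m) * g j) = e n - (\<Prod>j<n. r j) * e 0"
    by (rule Suc.IH) (simp add: Suc.prems)
  have "(\<Sum>j<Suc n. (\<Prod>m = Suc j..<Suc n. r m) * g j)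
      = r n * (\<Sum>j<n. (\<Prod>m = Suc j..<n. r m) * g j) + g n"
    by (simp add: prod.op_ivl_Suc sum_distrib_left algebra_simps)
  also have "\<dots> = r n * (e n - (\<Prod>j<n. r j) * e 0) + (e (Suc n) - r n * e n)"
    using IH Suc.prems[of n] by simp
  also have "\<dots> = e (Suc n) - (\<Prod>j<Suc n. r j) * e 0"
    by (simp add: algebra_simps)
  finally show ?case .
qed

lemma poly_mapping_sum_monomials:
  "f = (\<Sum>m\<in>Poly_Mapping.keys f. Poly_Mapping.single m (Poly_Mapping.lookup f m))"
proof (rule poly_mapping_eqI)
  fix k
  have "(\<Sum>m\<in>Poly_Mapping.keys f. Poly_Mapping.lookup (Poly_Mapping.single m (Poly_Mapping.lookup f m)) k)
      = (\<Sum>m\<in>Poly_Mapping.keys f. if m = k then Poly_Mapping.lookup f m else 0)"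
    by (intro sum.cong) (auto simp: lookup_single)
  also have "\<dots> = Poly_Mapping.lookup f k"
    by (simp add: sum.delta in_keys_iff)
  finally show "Poly_Mapping.lookup f k
      = Poly_Mapping.lookup (\<Sum>m\<in>Poly_Mapping.keys f. Poly_Mapping.single m (Poly_Mapping.lookup f m)) k"
    by (simp add: lookup_sum)
qed

section \<open>Partial derivatives of polynomials\<close>

definition mpoly_pderiv :: "nat \<times> nat \<Rightarrow> 'k::comm_ring_1 mpoly \<Rightarrow> 'k mpoly" where
  "mpoly_pderiv v f = (\<Sum>m\<in>Poly_Mapping.keys f. Poly_Mapping.single (m - Poly_Mapping.single v 1)
      (Poly_Mapping.lookup f m * of_nat (Poly_Mapping.lookup m v)))"

lemma mpoly_pderiv_eq_sum_superset:
  assumes "finite S" "Poly_Mapping.keys f \<subseteq> S"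
  shows "mpoly_pderiv v f = (\<Sum>m\<in>S. Poly_Mapping.single (m - Poly_Mapping.single v 1)
      (Poly_Mapping.lookup f m * of_nat (Poly_Mapping.lookup m v)))"
  unfolding mpoly_pderiv_def using assms
  by (intro sum.mono_neutral_left) (auto simp: in_keys_iff)

lemma mpoly_pderiv_add: "mpoly_pderiv v (f + g) = mpoly_pderiv v f + mpoly_pderiv v g"
proof -
  let ?S = "Poly_Mapping.keys f \<union> Poly_Mapping.keys g"
  have S: "finite ?S" by simp
  show ?thesis
    using mpoly_pderiv_eq_sum_superset[OF S keys_add, of v]
      mpoly_pderiv_eq_sum_superset[OF S, of f v] mpoly_pderiv_eq_sum_superset[OF S, of g v]
    by (simp add: lookup_add distrib_right single_add sum.distrib)
qed

lemma mpoly_pderiv_zero [simp]: "mpoly_pderiv v 0 = 0"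
  by (simp add: mpoly_pderiv_def)

lemma mpoly_pderiv_sum: "mpoly_pderiv v (sum F A) = (\<Sum>x\<in>A. mpoly_pderiv v (F x))"
  by (induction A rule: infinite_finite_induct) (auto simp: mpoly_pderiv_add)

lemma mpoly_pderiv_single: "mpoly_pderiv v (Poly_Mapping.single m c) =
    Poly_Mapping.single (m - Poly_Mapping.single v 1) (c * of_nat (Poly_Mapping.lookup m v))"
  by (cases "c = 0") (simp_all add: mpoly_pderiv_def)

lemma mpoly_pderiv_const [simp]: "mpoly_pderiv v (const c) = 0"
  by (simp add: const_def mpoly_pderiv_single)

lemma mpoly_pderiv_var: "mpoly_pderiv v (var pp j) = (if v = (pp, j) then 1 else 0)"
  by (auto simp: var_def mpoly_pderiv_single lookup_single)

text \<open>If \<open>v\<close> does not occur in \<open>n\<close> the coefficient vanishes, so the truncated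
  subtraction of exponents may be moved freely.\<close>
lemma single_add_diff_single:
  "Poly_Mapping.single (m + (n - Poly_Mapping.single v 1)) (c * of_nat (Poly_Mapping.lookup n v))
     = Poly_Mapping.single (m + n - Poly_Mapping.single v 1) (c * of_nat (Poly_Mapping.lookup n v))"
proof (cases "Poly_Mapping.lookup n v = 0")
  case False
  then have "m + (n - Poly_Mapping.single v 1) = m + n - Poly_Mapping.single v 1"
    by (intro poly_mapping_eqI) (auto simp: lookup_add lookup_minus lookup_single when_def)
  then show ?thesis by simp
qed simp

lemma mpoly_pderiv_mult_single:
  "mpoly_pderiv v (Poly_Mapping.single m a * Poly_Mapping.single n b) =
     Poly_Mapping.single m a * mpoly_pderiv v (Poly_Mapping.single n b)
     + Poly_Mapping.single n b * mpoly_pderiv v (Poly_Mapping.single m a)"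
  (is "?lhs = ?rhs")
proof -
  let ?e = "Poly_Mapping.single v (1::nat)"
  have "?lhs = Poly_Mapping.single (m + n - ?e) (a * b * of_nat (Poly_Mapping.lookup m v))
      + Poly_Mapping.single (m + n - ?e) (a * b * of_nat (Poly_Mapping.lookup n v))"
    by (simp add: mult_single mpoly_pderiv_single lookup_add distrib_left single_add)
  moreover have "?rhs = Poly_Mapping.single (m + (n - ?e)) (a * b * of_nat (Poly_Mapping.lookup n v))
      + Poly_Mapping.single (n + (m - ?e)) (a * b * of_nat (Poly_Mapping.lookup m v))"
    by (simp add: mult_single mpoly_pderiv_single mult_ac)
  ultimately show ?thesis
    unfolding single_add_diff_single add.commute[of n m] by (simp add: add.commute)
qed

lemma mpoly_pderiv_mult: "mpoly_pderiv v (f * g) = f * mpoly_pderiv v g + g * mpoly_pderiv v f"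
proof -
  let ?s = "\<lambda>h m. Poly_Mapping.single m (Poly_Mapping.lookup h m)"
  have fg: "f * g = (\<Sum>m\<in>Poly_Mapping.keys f. \<Sum>n\<in>Poly_Mapping.keys g. ?s f m * ?s g n)"
    by (subst poly_mapping_sum_monomials[of f], subst poly_mapping_sum_monomials[of g])
      (rule sum_product)
  have "mpoly_pderiv v (f * g) = (\<Sum>m\<in>Poly_Mapping.keys f. \<Sum>n\<in>Poly_Mapping.keys g.
          ?s f m * mpoly_pderiv v (?s g n) + ?s g n * mpoly_pderiv v (?s f m))"
    unfolding fg by (simp add: mpoly_pderiv_sum mpoly_pderiv_mult_single)
  also have "\<dots> = (\<Sum>m\<in>Poly_Mapping.keys f. ?s f m) * (\<Sum>n\<in>Poly_Mapping.keys g. mpoly_pderiv v (?s g n))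
      + (\<Sum>n\<in>Poly_Mapping.keys g. ?s g n) * (\<Sum>m\<in>Poly_Mapping.keys f. mpoly_pderiv v (?s f m))"
    by (simp add: sum.distrib sum_distrib_left sum_distrib_right mult.commute
        sum.swap[of _ "Poly_Mapping.keys f"])
  also have "\<dots> = f * mpoly_pderiv v g + g * mpoly_pderiv v f"
    by (simp flip: mpoly_pderiv_sum poly_mapping_sum_monomials)
  finally show ?thesis .
qed

lemma finite_idx: "finite (idx l d)"
proof -
  have "idx l d \<subseteq> {1..l} \<times> {0..Max (d ` {1..l})}"
    by (auto simp: idx_def intro!: le_trans[OF _ Max_ge])
  then show ?thesis by (rule finite_subset) simp
qed

lemma polyring_zero [simp]: "0 \<in> polyring l d"
  by (simp add: polyring_def)

lemma polyring_add: "f \<in> polyring l d \<Longrightarrow> g \<in> polyring l d \<Longrightarrow> f + g \<in> polyring l d"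
  unfolding polyring_def using keys_add[of f g] by blast

lemma polyring_diff: "f \<in> polyring l d \<Longrightarrow> g \<in> polyring l d \<Longrightarrow> f - g \<in> polyring l d"
  unfolding polyring_def using keys_diff[of f g] by blast

lemma polyring_mult:
  assumes "f \<in> polyring l d" "g \<in> polyring l d"
  shows "f * g \<in> polyring l d"
  unfolding polyring_def mem_Collect_eq
proof
  fix m assume "m \<in> Poly_Mapping.keys (f * g)"
  then obtain a b where "m = a + b" "a \<in> Poly_Mapping.keys f" "b \<in> Poly_Mapping.keys g"
    using keys_mult[of f g] by blast
  then show "Poly_Mapping.keys m \<subseteq> idx l d"
    using assms keys_add[of a b] unfolding polyring_def by blast
qed

lemma polyring_single: "Poly_Mapping.keys m \<subseteq> idx l d \<Longrightarrow> Poly_Mapping.single m c \<in> polyring l d"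
  unfolding polyring_def by simp

lemma polyring_const [simp]: "const c \<in> polyring l d"
  unfolding const_def by (rule polyring_single) simp

lemma polyring_one [simp]: "1 \<in> polyring l d"
  using polyring_const[of 1] by (simp add: const_def)

lemma polyring_var: "(pp, j) \<in> idx l d \<Longrightarrow> var pp j \<in> polyring l d"
  unfolding var_def by (rule polyring_single) simp

lemma polyring_sum: "(\<And>x. x \<in> A \<Longrightarrow> F x \<in> polyring l d) \<Longrightarrow> sum F A \<in> polyring l d"
  by (induction A rule: infinite_finite_induct) (auto intro: polyring_add)

lemma polyring_prod: "(\<And>x. x \<in> A \<Longrightarrow> F x \<in> polyring l d) \<Longrightarrow> prod F A \<in> polyring l d"
  by (induction A rule: infinite_finite_induct) (auto intro: polyring_mult)

lemma polyring_mpoly_pderiv: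
  assumes "f \<in> polyring l d"
  shows "mpoly_pderiv v f \<in> polyring l d"
  unfolding mpoly_pderiv_def
proof (rule polyring_sum, rule polyring_single)
  fix m assume m: "m \<in> Poly_Mapping.keys f"
  have "Poly_Mapping.keys (m - Poly_Mapping.single v 1) \<subseteq> Poly_Mapping.keys m"
    by (auto simp: in_keys_iff lookup_minus)
  then show "Poly_Mapping.keys (m - Poly_Mapping.single v 1) \<subseteq> idx l d"
    using assms m unfolding polyring_def by blast
qed

definition vector_field_deriv ::
    "(nat \<times> nat \<Rightarrow> 'k::comm_ring_1 mpoly) \<Rightarrow> (nat \<times> nat) set \<Rightarrow> 'k mpoly \<Rightarrow> 'k mpoly" where
  "vector_field_deriv ps I f = (\<Sum>v\<in>I. ps v * mpoly_pderiv v f)"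

lemma vector_field_deriv_add:
  "vector_field_deriv ps I (f + g) = vector_field_deriv ps I f + vector_field_deriv ps I g"
  by (simp add: vector_field_deriv_def mpoly_pderiv_add distrib_left sum.distrib)

lemma vector_field_deriv_mult:
  "vector_field_deriv ps I (f * g) = f * vector_field_deriv ps I g + g * vector_field_deriv ps I f"
  by (simp add: vector_field_deriv_def mpoly_pderiv_mult distrib_left sum.distrib
      sum_distrib_left algebra_simps)

lemma vector_field_deriv_const [simp]: "vector_field_deriv ps I (const c) = 0"
  by (simp add: vector_field_deriv_def)

lemma vector_field_deriv_var:
  "finite I \<Longrightarrow> (pp, j) \<in> I \<Longrightarrow> vector_field_deriv ps I (var pp j) = ps (pp, j)"
  by (simp add: vector_field_deriv_def mpoly_pderiv_var if_distrib sum.delta' cong: if_cong)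

lemma mult_vector_field_deriv_power:
  "f * vector_field_deriv ps I (f ^ n) = of_nat n * f ^ n * vector_field_deriv ps I f"
proof (induction n)
  case 0
  have "vector_field_deriv ps I 1 = 0"
    using vector_field_deriv_const[of ps I 1] by (simp add: const_def)
  then show ?case by simp
next
  case (Suc n)
  then show ?case by (simp add: vector_field_deriv_mult algebra_simps)
qed

lemma is_k_derivation_vector_field_deriv:
  assumes "\<And>v. v \<in> idx l d \<Longrightarrow> ps v \<in> polyring l d"
  shows "is_k_derivation l d (vector_field_deriv ps (idx l d))"
  unfolding is_k_derivation_def using assms
  by (auto simp: vector_field_deriv_add vector_field_deriv_mult)
    (auto simp: vector_field_deriv_def intro!: polyring_sum polyring_mult polyring_mpoly_pderiv)

section \<open>The derivation \<open>\<psi>\<close> on the chart\<close>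

definition chart_unit_var :: "nat \<Rightarrow> nat \<Rightarrow> nat \<Rightarrow> nat \<Rightarrow> 'k::comm_ring_1 mpoly" where
  "chart_unit_var sigma i pp j = (if (pp, j) = (sigma, i) then 1 else var pp j)"

definition chart_shifted_var :: "(nat \<Rightarrow> nat) \<Rightarrow> nat \<Rightarrow> nat \<Rightarrow> nat \<Rightarrow> nat \<Rightarrow> 'k::comm_ring_1 mpoly" where
  "chart_shifted_var d sigma i pp j = (if j < d pp then chart_unit_var sigma i pp (Suc j) else 0)"

definition chart_field :: "(nat \<Rightarrow> nat) \<Rightarrow> nat \<Rightarrow> nat \<Rightarrow> nat \<times> nat \<Rightarrow> 'k::field mpoly" where
  "chart_field d sigma i =
     (\<lambda>(pp, j). if (pp, j) = (sigma, i)
       then const (1 / of_nat i) * var sigma i * chart_shifted_var d sigma i sigma i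
       else chart_shifted_var d sigma i pp j
         - const (of_nat j / of_nat i) * var pp j * chart_shifted_var d sigma i sigma i)"

definition chart_derivation :: "nat \<Rightarrow> (nat \<Rightarrow> nat) \<Rightarrow> nat \<Rightarrow> nat \<Rightarrow> 'k::field mpoly \<Rightarrow> 'k mpoly" where
  "chart_derivation l d sigma i = vector_field_deriv (chart_field d sigma i) (idx l d)"

lemma chart_pullback_eq:
  "1 \<le> i \<Longrightarrow> chart_pullback sigma i pp j = var sigma i ^ j * chart_unit_var sigma i pp j"
  by (simp add: chart_pullback_def chart_unit_var_def)

lemma pullback_of_partial_eq:
  "pullback_of_partial d sigma i pp j = var sigma i ^ Suc j * chart_shifted_var d sigma i pp j"
  by (auto simp: pullback_of_partial_def chart_pullback_def chart_shifted_var_def chart_unit_var_def)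

lemma chart_derivation_var:
  "(pp, j) \<in> idx l d \<Longrightarrow> chart_derivation l d sigma i (var pp j) = chart_field d sigma i (pp, j)"
  by (simp add: chart_derivation_def vector_field_deriv_var finite_idx)

lemma polyring_chart_shifted_var:
  "(pp, j) \<in> idx l d \<Longrightarrow> chart_shifted_var d sigma i pp j \<in> polyring l d"
  by (auto simp: chart_shifted_var_def chart_unit_var_def idx_def intro!: polyring_var)

lemma is_k_derivation_chart_derivation:
  assumes "(sigma, i) \<in> idx l d"
  shows "is_k_derivation l d (chart_derivation l d sigma i)"
  unfolding chart_derivation_def
proof (rule is_k_derivation_vector_field_deriv)
  fix v assume "v \<in> idx l d"
  then show "chart_field d sigma i v \<in> polyring l d"
    using assms
    by (cases v) (auto simp: chart_field_def intro!: polyring_mult polyring_diff polyring_var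
        polyring_chart_shifted_var)
qed

lemma chart_derivation_pullback:
  fixes l sigma i :: nat and d :: "nat \<Rightarrow> nat"
  defines "t \<equiv> var sigma i :: 'k::field mpoly"
    and "\<psi> \<equiv> chart_derivation l d sigma i"
  assumes si: "(sigma, i) \<in> idx l d" and pj: "(pp, j) \<in> idx l d"
    and i_unit: "of_nat i \<noteq> (0 :: 'k)"
  shows "t * \<psi> (t ^ j * chart_unit_var sigma i pp j) = t ^ Suc j * chart_shifted_var d sigma i pp j"
proof -
  let ?w = "chart_shifted_var d sigma i sigma i :: 'k mpoly"
  have \<psi>_t: "\<psi> t = const (1 / of_nat i) * t * ?w"
    using chart_derivation_var[OF si, of sigma i] by (simp add: \<psi>_def t_def chart_field_def)
  have of_nat_const: "of_nat n * const (1 / of_nat i) = const (of_nat n / of_nat i :: 'k)" for n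
    by (simp add: const_def mult_single flip: single_of_nat)
  have t_\<psi>_power: "t * \<psi> (t ^ n) = const (of_nat n / of_nat i) * t ^ n * t * ?w" for n
  proof -
    have "t * \<psi> (t ^ n) = of_nat n * t ^ n * \<psi> t"
      unfolding \<psi>_def chart_derivation_def by (rule mult_vector_field_deriv_power)
    also have "\<dots> = (of_nat n * const (1 / of_nat i)) * t ^ n * t * ?w"
      by (simp add: \<psi>_t mult_ac)
    finally show ?thesis
      by (simp add: of_nat_const)
  qed
  show ?thesis
  proof (cases "(pp, j) = (sigma, i)")
    case True
    have "const (of_nat i / of_nat i :: 'k) = 1"
      using i_unit by (simp add: const_def)
    then show ?thesis
      using True t_\<psi>_power[of i] by (simp add: chart_unit_var_def t_def algebra_simps)
  next
    case False
    let ?c = "const (of_nat j / of_nat i) :: 'k mpoly"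
    have unit_var: "chart_unit_var sigma i pp j = var pp j"
      unfolding chart_unit_var_def if_not_P[OF False] ..
    have \<psi>_var: "\<psi> (var pp j) = chart_shifted_var d sigma i pp j - ?c * var pp j * ?w"
      unfolding \<psi>_def chart_derivation_var[OF pj] chart_field_def prod.case if_not_P[OF False] ..
    have "t * \<psi> (t ^ j * var pp j) = t ^ Suc j * \<psi> (var pp j) + var pp j * (t * \<psi> (t ^ j))"
      by (simp add: \<psi>_def chart_derivation_def vector_field_deriv_mult algebra_simps)
    also have "\<dots> = t ^ Suc j * (chart_shifted_var d sigma i pp j - ?c * var pp j * ?w)
        + var pp j * (?c * t ^ j * t * ?w)"
      by (simp only: \<psi>_var t_\<psi>_power)
    also have "\<dots> = t ^ Suc j * chart_shifted_var d sigma i pp j"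
      by (simp add: algebra_simps)
    finally show ?thesis
      unfolding unit_var .
  qed
qed

lemma chart_derivation_unit_ideal:
  fixes l sigma i :: nat and d :: "nat \<Rightarrow> nat"
  defines "\<psi> \<equiv> chart_derivation l d sigma i :: 'k::field mpoly \<Rightarrow> 'k mpoly"
  assumes si: "(sigma, i) \<in> idx l d" and "1 \<le> i"
  shows "\<exists>a. (\<forall>q \<in> idx l d. a q \<in> polyring l d) \<and>
           (\<Sum>(pp, j) \<in> idx l d. a (pp, j) * \<psi> (var pp j)) = 1"
proof -
  define e :: "nat \<Rightarrow> 'k mpoly" where "e = chart_unit_var sigma i sigma"
  define r :: "nat \<Rightarrow> 'k mpoly" where
    "r m = const (of_nat m / of_nat i) * chart_shifted_var d sigma i sigma i" for m
  define a :: "nat \<times> nat \<Rightarrow> 'k mpoly" where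
    "a q = (if fst q = sigma \<and> snd q < i then \<Prod>m = Suc (snd q)..<i. r m else 0)" for q
  have sj: "(sigma, j) \<in> idx l d" if "j \<le> i" for j
    using si that by (simp add: idx_def)
  have chain: "\<psi> (var sigma j) = e (Suc j) - r j * e j" if "j < i" for j
  proof -
    have "j < d sigma"
      using that si by (simp add: idx_def)
    then show ?thesis
      using that sj[of j]
      by (simp add: \<psi>_def chart_derivation_var e_def r_def chart_field_def
          chart_shifted_var_def chart_unit_var_def)
  qed
  have "(\<Sum>(pp, j) \<in> idx l d. a (pp, j) * \<psi> (var pp j))
      = (\<Sum>q \<in> Pair sigma ` {..<i}. a q * \<psi> (var (fst q) (snd q)))"
    unfolding split_def prod.collapse using finite_idx sj
    by (intro sum.mono_neutral_right) (auto simp: a_def)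
  also have "\<dots> = (\<Sum>j<i. (\<Prod>m = Suc j..<i. r m) * \<psi> (var sigma j))"
    by (subst sum.reindex) (auto simp: inj_on_def a_def)
  also have "\<dots> = e i - (\<Prod>j<i. r j) * e 0"
    using chain by (rule sum_prod_telescope)
  also have "\<dots> = 1"
  proof -
    have "(\<Prod>j<i. r j) = 0"
      using \<open>1 \<le> i\<close> by (intro prod_zero bexI[of _ 0]) (auto simp: r_def const_def)
    then show ?thesis
      by (simp add: e_def chart_unit_var_def)
  qed
  finally have "(\<Sum>(pp, j) \<in> idx l d. a (pp, j) * \<psi> (var pp j)) = 1" .
  moreover have "a q \<in> polyring l d" for q
    using polyring_chart_shifted_var[OF si]
    by (auto simp: a_def r_def intro!: polyring_prod polyring_mult)
  ultimately show ?thesis by blast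
qed

theorem mainTheorem10:
  fixes p l :: nat and d :: "nat \<Rightarrow> nat" and sigma i :: nat
  assumes "prime p" and "CHAR('k::alg_closed_field) = p"
    and "\<forall>lam. 1 \<le> lam \<and> lam \<le> l \<longrightarrow> d lam \<le> p - 1"
    and "1 \<le> sigma" and "sigma \<le> l" and "1 \<le> i" and "i \<le> d sigma"
  shows "\<exists>psi :: 'k mpoly \<Rightarrow> 'k mpoly.
           is_k_derivation l d psi \<and>
           (\<forall>(pp, j) \<in> idx l d.
              var sigma i * psi (chart_pullback sigma i pp j) = pullback_of_partial d sigma i pp j) \<and>
           (\<exists>a :: nat \<times> nat \<Rightarrow> 'k mpoly. (\<forall>q \<in> idx l d. a q \<in> polyring l d) \<and>
              (\<Sum>(pp, j) \<in> idx l d. a (pp, j) * psi (var pp j)) = 1)"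
proof -
  have "d sigma \<le> p - 1"
    using assms(3-5) by blast
  then have "i < p"
    using assms(7) prime_ge_2_nat[OF assms(1)] by linarith
  then have i_unit: "of_nat i \<noteq> (0 :: 'k)"
    using assms(2,6) by (auto simp: of_nat_eq_0_iff_char_dvd dest: dvd_imp_le)
  have si: "(sigma, i) \<in> idx l d"
    using assms(4,5,7) by (simp add: idx_def)
  have "(var sigma i :: 'k mpoly) * chart_derivation l d sigma i (chart_pullback sigma i pp j)
          = pullback_of_partial d sigma i pp j" if "(pp, j) \<in> idx l d" for pp j
    unfolding chart_pullback_eq[OF assms(6)] pullback_of_partial_eq
    by (rule chart_derivation_pullback[OF si that i_unit])
  then show ?thesis
    using is_k_derivation_chart_derivation[OF si] chart_derivation_unit_ideal[OF si assms(6)]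
    by blast
qed

end
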